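(* Let $\mathrm{TM}_{1state}$ denote the class of languages $L(M)$ recognized by one-state Turing machines $M$. Then: (i) there exists a regular language that is not in $\mathrm{TM}_{1state}$, for example $\{1\}$; (ii) there exists a language in $\mathrm{TM}_{1state}$ that is not context-free.
   Context: A one-state Turing machine is a tuple $\langle \{q\}, \Sigma, \Gamma, q, H, \delta\rangle$ with the following components: a unique state $q$; an input alphabet $\Sigma$ not containing the blank symbol $\sqcup$; a tape alphabet $\Gamma\supseteq\Sigma\cup\{\sqcup\}$; a set of halting symbols $H\subseteq\Gamma$; and a transition function $\delta:\Gamma\setminus H\to\Gamma\times\{L,R\}$. The tape is infinite in both directions. On input $x\in\Sigma^*$, the tape holds $x$ with blanks everywhere else, and the head starts on the leftmost symbol of $x$ (on a blank cell if $x$ is empty). At each step, if the scanned symbol is in $H$, the machine halts. Otherwise, with $\delta(a)=(b,D)$ for the scanned symbol $a$, it writes $b$ and moves one cell in direction $D$. The language recognized by $M$ is $L(M)=\{x\in\Sigma^*\mid M\text{ halts on input }x\}$. *)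

theory Defs
  imports Main
begin

(* Symbols (input symbols, tape symbols, DFA states, grammar symbols) are encoded
   as natural numbers; any finite alphabet can be so encoded. *)

datatype move = MoveL | MoveR

record tm1 =
  tm_sigma :: "nat set"
  tm_gamma :: "nat set"
  tm_blank :: nat
  tm_halt  :: "nat set"
  tm_delta :: "nat \<Rightarrow> nat \<times> move"   (* transition function, relevant on gamma - H *)

definition wf_tm1 :: "tm1 \<Rightarrow> bool" where
  "wf_tm1 M \<longleftrightarrow> finite (tm_gamma M) \<and> tm_sigma M \<subseteq> tm_gamma M \<and>
     tm_blank M \<in> tm_gamma M \<and> tm_blank M \<notin> tm_sigma M \<and>
     tm_halt M \<subseteq> tm_gamma M \<and>
     (\<forall>a \<in> tm_gamma M - tm_halt M. fst (tm_delta M a) \<in> tm_gamma M)"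

(* configuration: tape contents and head position *)
type_synonym config = "(int \<Rightarrow> nat) \<times> int"

definition init_config :: "tm1 \<Rightarrow> nat list \<Rightarrow> config" where
  "init_config M x =
     ((\<lambda>i. if 0 \<le> i \<and> i < int (length x) then x ! nat i else tm_blank M), 0)"

definition step_tm1 :: "tm1 \<Rightarrow> config \<Rightarrow> config" where
  "step_tm1 M c = (let (tape, p) = c; (b, d) = tm_delta M (tape p) in
     (tape(p := b), if d = MoveL then p - 1 else p + 1))"

definition halts_tm1 :: "tm1 \<Rightarrow> nat list \<Rightarrow> bool" where
  "halts_tm1 M x \<longleftrightarrow>
     (\<exists>n. let (tape, p) = (step_tm1 M ^^ n) (init_config M x) in tape p \<in> tm_halt M)"

definition lang_tm1 :: "tm1 \<Rightarrow> nat list set" where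
  "lang_tm1 M = {x \<in> lists (tm_sigma M). halts_tm1 M x}"

definition TM_1state :: "nat list set set" where
  "TM_1state = {L. \<exists>M. wf_tm1 M \<and> L = lang_tm1 M}"

record dfa =
  dfa_states :: "nat set"
  dfa_alpha  :: "nat set"
  dfa_start  :: nat
  dfa_final  :: "nat set"
  dfa_trans  :: "nat \<Rightarrow> nat \<Rightarrow> nat"

definition wf_dfa :: "dfa \<Rightarrow> bool" where
  "wf_dfa A \<longleftrightarrow> finite (dfa_states A) \<and> finite (dfa_alpha A) \<and>
     dfa_start A \<in> dfa_states A \<and> dfa_final A \<subseteq> dfa_states A \<and>
     (\<forall>q \<in> dfa_states A. \<forall>a \<in> dfa_alpha A. dfa_trans A q a \<in> dfa_states A)"

definition lang_dfa :: "dfa \<Rightarrow> nat list set" where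
  "lang_dfa A = {w \<in> lists (dfa_alpha A). foldl (dfa_trans A) (dfa_start A) w \<in> dfa_final A}"

definition regular :: "nat list set \<Rightarrow> bool" where
  "regular L \<longleftrightarrow> (\<exists>A. wf_dfa A \<and> lang_dfa A = L)"

(* Context-free languages: languages of context-free grammars.
   Symbols: Inl A = nonterminal A, Inr a = terminal a. *)
type_synonym cfg = "(nat \<times> (nat + nat) list) set \<times> nat"   (* productions, start symbol *)

definition cfg_step :: "(nat \<times> (nat + nat) list) set \<Rightarrow> ((nat + nat) list \<times> (nat + nat) list) set" where
  "cfg_step P = {(u @ [Inl A] @ v, u @ \<alpha> @ v) | u v A \<alpha>. (A, \<alpha>) \<in> P}"

definition lang_cfg :: "cfg \<Rightarrow> nat list set" where
  "lang_cfg G = {w. ([Inl (snd G)], map Inr w) \<in> (cfg_step (fst G))\<^sup>*}"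

definition context_free :: "nat list set \<Rightarrow> bool" where
  "context_free L \<longleftrightarrow> (\<exists>G. finite (fst G) \<and> lang_cfg G = L)"

end

theory Submission
  imports Defs
begin

text \<open>
  (i) Suppose a one-state machine halts on \<open>[a]\<close> but not on \<open>[]\<close>, so the blank is not a halting
  symbol. If the blank moves right, the halting run on \<open>[a]\<close> never leaves the cells \<open>\<le> 0\<close>, since
  beyond them it would meet only blanks and walk off forever; on these cells \<open>[a]\<close> and \<open>[a, a]\<close>
  look the same. If the blank moves left, the run on \<open>[a]\<close> stays in the cells \<open>\<ge> 0\<close>, so \<open>a\<close>
  (unless it is itself halting) moves right, and after one step the run on \<open>[a, a]\<close> is the run on
  \<open>[a]\<close> shifted by one cell. Either way the machine also halts on \<open>[a, a]\<close>.

  (ii) A one-state machine can turn \<open>1\<^sup>m 2\<^sup>n\<close> into a block of \<open>m\<close> fuel cells followed by an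
  \<open>n\<close>-digit binary counter and an end marker, spend one fuel cell per value of the counter, and halt
  on reaching the end marker; when the fuel runs out the head walks off to the left forever. So on
  sorted words it accepts exactly \<open>1\<^sup>m 2\<^sup>n\<close> with \<open>2\<^sup>n \<le> m\<close>. Pumping \<open>1\<^bsup>2\<^sup>n\<^esup> 2\<^sup>n\<close>, with a
  pumping lemma whose pumped factors only use letters of the middle factor (so that pumped sorted
  words stay sorted), either lowers the number of 1s or raises the number of 2s too much.
\<close>

section \<open>Runs of one-state machines\<close>

definition scanned :: "config \<Rightarrow> nat" where
  "scanned c = fst c (snd c)"

definition halts_from :: "tm1 \<Rightarrow> config \<Rightarrow> bool" where
  "halts_from M c \<longleftrightarrow> (\<exists>n. scanned ((step_tm1 M ^^ n) c) \<in> tm_halt M)"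

lemma halts_tm1_iff_halts_from: "halts_tm1 M x \<longleftrightarrow> halts_from M (init_config M x)"
  unfolding halts_tm1_def halts_from_def scanned_def by (simp add: case_prod_beta)

lemma step_tm1_simp:
  "step_tm1 M (T, p) = (T(p := fst (tm_delta M (T p))),
     if snd (tm_delta M (T p)) = MoveL then p - 1 else p + 1)"
  by (simp add: step_tm1_def split: prod.splits)

lemma head_step: "snd (step_tm1 M c) = snd c - 1 \<or> snd (step_tm1 M c) = snd c + 1"
  by (cases c) (simp add: step_tm1_simp)

lemma tape_step_other: "i \<noteq> snd c \<Longrightarrow> fst (step_tm1 M c) i = fst c i"
  by (cases c) (simp add: step_tm1_simp)

lemma halts_from_run_prefix:
  assumes "scanned ((step_tm1 M ^^ n) c) \<in> tm_halt M" "j \<le> n"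
  shows "halts_from M ((step_tm1 M ^^ j) c)"
proof -
  have "(step_tm1 M ^^ n) c = (step_tm1 M ^^ (n - j)) ((step_tm1 M ^^ j) c)"
    using assms(2) by (metis funpow_add comp_apply le_add_diff_inverse2)
  then show ?thesis using assms(1) unfolding halts_from_def by metis
qed

lemma halts_from_step:
  assumes "scanned c \<notin> tm_halt M"
  shows "halts_from M (step_tm1 M c) \<longleftrightarrow> halts_from M c"
proof
  assume "halts_from M c"
  then obtain n where n: "scanned ((step_tm1 M ^^ n) c) \<in> tm_halt M"
    unfolding halts_from_def by blast
  with assms obtain n' where "n = Suc n'" by (cases n) auto
  with n show "halts_from M (step_tm1 M c)"
    unfolding halts_from_def by (metis comp_apply funpow_Suc_right)
next
  assume "halts_from M (step_tm1 M c)"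
  then show "halts_from M c"
    unfolding halts_from_def by (metis comp_apply funpow_Suc_right)
qed

definition tm1_move :: "tm1 \<Rightarrow> config \<Rightarrow> config \<Rightarrow> bool" where
  "tm1_move M c c' \<longleftrightarrow> scanned c \<notin> tm_halt M \<and> c' = step_tm1 M c"

abbreviation reaches :: "tm1 \<Rightarrow> config \<Rightarrow> config \<Rightarrow> bool" where
  "reaches M \<equiv> (tm1_move M)\<^sup>*\<^sup>*"

lemma reaches_halts_from_iff:
  assumes "reaches M c c'"
  shows "halts_from M c \<longleftrightarrow> halts_from M c'"
  using assms by induction (auto simp: tm1_move_def halts_from_step)

definition list_tape :: "nat \<Rightarrow> nat list \<Rightarrow> int \<Rightarrow> nat" where
  "list_tape b xs i = (if 0 \<le> i \<and> i < int (length xs) then xs ! nat i else b)"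

lemma init_config_list_tape: "init_config M x = (list_tape (tm_blank M) x, 0)"
  by (simp add: init_config_def list_tape_def fun_eq_iff)

lemma list_tape_nth: "j < length xs \<Longrightarrow> list_tape b xs (int j) = xs ! j"
  by (simp add: list_tape_def)

lemma list_tape_append_blank: "list_tape b (xs @ [b]) = list_tape b xs"
  by (auto simp: list_tape_def fun_eq_iff nth_append nat_less_iff)

lemma reaches_write:
  assumes "j < length xs" "xs ! j = s" "s \<notin> tm_halt M" "tm_delta M s = (s', d)"
  shows "reaches M (list_tape b xs, int j)
           (list_tape b (xs[j := s']), if d = MoveL then int j - 1 else int j + 1)"
proof -
  have "(list_tape b xs)(int j := s') = list_tape b (xs[j := s'])"
    using assms(1) by (auto simp: list_tape_def fun_eq_iff nth_list_update nat_eq_iff)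
  then show ?thesis
    using assms by (intro r_into_rtranclp) (simp add: tm1_move_def scanned_def step_tm1_simp list_tape_nth)
qed

lemma reaches_sweep_right:
  assumes "s \<notin> tm_halt M" "tm_delta M s = (s', MoveR)"
  shows "reaches M (list_tape b (us @ replicate l s @ vs), int (length us))
           (list_tape b (us @ replicate l s' @ vs), int (length us + l))"
proof (induction l arbitrary: us)
  case (Suc l)
  have "reaches M (list_tape b (us @ s # replicate l s @ vs), int (length us))
          (list_tape b ((us @ [s']) @ replicate l s @ vs), int (length (us @ [s'])))"
    using reaches_write[of "length us" "us @ s # replicate l s @ vs" s M s' MoveR b] assms
    by (simp add: list_update_append add.commute)
  with Suc[of "us @ [s']"] show ?case
    by (simp add: replicate_app_Cons_same)
qed simp

lemma reaches_sweep_left: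
  assumes "s \<notin> tm_halt M" "tm_delta M s = (s', MoveL)"
  shows "reaches M (list_tape b (us @ replicate l s @ vs), int (length us + l) - 1)
           (list_tape b (us @ replicate l s' @ vs), int (length us) - 1)"
proof (induction l arbitrary: vs)
  case (Suc l)
  have "reaches M (list_tape b ((us @ replicate l s) @ s # vs), int (length us + l))
          (list_tape b ((us @ replicate l s) @ s' # vs), int (length us + l) - 1)"
    using reaches_write[of "length us + l" "(us @ replicate l s) @ s # vs" s M s' MoveL b] assms
    by (simp add: list_update_append nth_append)
  with Suc[of "s' # vs"] show ?case
    by (simp add: replicate_app_Cons_same)
qed simp

lemma run_unscanned_cell:
  assumes "\<forall>k<j. snd ((step_tm1 M ^^ k) c) \<noteq> i"
  shows "fst ((step_tm1 M ^^ j) c) i = fst c i"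
  using assms by (induction j) (auto simp: tape_step_other)

lemma not_halts_from_blank_right:
  assumes "tm_blank M \<notin> tm_halt M" "snd (tm_delta M (tm_blank M)) = MoveR"
    "\<forall>i\<ge>p. T i = tm_blank M"
  shows "\<not> halts_from M (T, p)"
proof -
  have "snd ((step_tm1 M ^^ j) (T, p)) = p + int j \<and>
        (\<forall>i\<ge>p + int j. fst ((step_tm1 M ^^ j) (T, p)) i = tm_blank M)" for j
  proof (induction j)
    case (Suc j)
    then show ?case
      using assms(2) by (cases "(step_tm1 M ^^ j) (T, p)") (auto simp: step_tm1_simp)
  qed (use assms(3) in simp)
  then show ?thesis
    using assms(1) unfolding halts_from_def scanned_def by (metis order_refl)
qed

text \<open>Reflecting the tape at cell 0 and swapping the directions commutes with running the machine,
  which transfers facts about the right end of the tape to the left end.\<close>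

fun flip_move :: "move \<Rightarrow> move" where
  "flip_move MoveL = MoveR"
| "flip_move MoveR = MoveL"

definition mirror_tm1 :: "tm1 \<Rightarrow> tm1" where
  "mirror_tm1 M = M\<lparr>tm_delta := \<lambda>a. apsnd flip_move (tm_delta M a)\<rparr>"

definition mirror_config :: "config \<Rightarrow> config" where
  "mirror_config c = ((\<lambda>i. fst c (- i)), - snd c)"

lemma mirror_tm1_simps [simp]:
  "tm_blank (mirror_tm1 M) = tm_blank M" "tm_halt (mirror_tm1 M) = tm_halt M"
  "tm_delta (mirror_tm1 M) a = apsnd flip_move (tm_delta M a)"
  by (simp_all add: mirror_tm1_def)

lemma run_mirror:
  "(step_tm1 (mirror_tm1 M) ^^ n) (mirror_config c) = mirror_config ((step_tm1 M ^^ n) c)"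
proof -
  have "step_tm1 (mirror_tm1 M) (mirror_config c) = mirror_config (step_tm1 M c)" for c
    by (cases c; cases "snd (tm_delta M (fst c (snd c)))")
       (auto simp: mirror_config_def step_tm1_simp fun_eq_iff apsnd_def map_prod_def split: prod.splits)
  then show ?thesis by (induction n) simp_all
qed

lemma halts_from_mirror: "halts_from (mirror_tm1 M) (mirror_config c) \<longleftrightarrow> halts_from M c"
  by (simp add: halts_from_def run_mirror) (simp add: scanned_def mirror_config_def)

lemma not_halts_from_blank_left:
  assumes "tm_blank M \<notin> tm_halt M" "snd (tm_delta M (tm_blank M)) = MoveL"
    "\<forall>i\<le>p. T i = tm_blank M"
  shows "\<not> halts_from M (T, p)"
  using not_halts_from_blank_right[of "mirror_tm1 M" "- p" "\<lambda>i. T (- i)"] assms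
  by (simp add: halts_from_mirror[of M "(T, p)", symmetric] mirror_config_def)

text \<open>The first time the head reached \<open>q + 1\<close> it would find only blanks from there on and sweep
  right forever.\<close>

lemma halting_run_head_le:
  assumes "tm_blank M \<notin> tm_halt M" "snd (tm_delta M (tm_blank M)) = MoveR"
    "\<forall>i>q. fst c i = tm_blank M" "snd c \<le> q"
    "scanned ((step_tm1 M ^^ n) c) \<in> tm_halt M" "j \<le> n"
  shows "snd ((step_tm1 M ^^ j) c) \<le> q"
proof (rule ccontr)
  assume "\<not> ?thesis"
  then obtain j0 where j0: "j0 \<le> j" "snd ((step_tm1 M ^^ j0) c) > q"
    and before: "\<forall>k<j0. snd ((step_tm1 M ^^ k) c) \<le> q"
    using ex_least_nat_le[of "\<lambda>k. snd ((step_tm1 M ^^ k) c) > q" j] by (metis not_le)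
  obtain k where k: "j0 = Suc k"
    using j0(2) assms(4) by (cases j0) auto
  have "snd ((step_tm1 M ^^ j0) c) = q + 1"
    using before j0(2) head_step[of M "(step_tm1 M ^^ k) c"] k by fastforce
  moreover have "\<forall>i\<ge>q + 1. fst ((step_tm1 M ^^ j0) c) i = tm_blank M"
  proof (intro allI impI)
    fix i :: int assume "q + 1 \<le> i"
    then have "fst ((step_tm1 M ^^ j0) c) i = fst c i"
      using before by (intro run_unscanned_cell) force
    then show "fst ((step_tm1 M ^^ j0) c) i = tm_blank M"
      using assms(3) \<open>q + 1 \<le> i\<close> by simp
  qed
  ultimately have "\<not> halts_from M ((step_tm1 M ^^ j0) c)"
    using not_halts_from_blank_right[OF assms(1,2)] by (metis prod.collapse)
  then show False
    using halts_from_run_prefix[OF assms(5)] j0(1) assms(6) by simp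
qed

lemma halting_run_head_ge:
  assumes "tm_blank M \<notin> tm_halt M" "snd (tm_delta M (tm_blank M)) = MoveL"
    "\<forall>i<q. fst c i = tm_blank M" "snd c \<ge> q"
    "scanned ((step_tm1 M ^^ n) c) \<in> tm_halt M" "j \<le> n"
  shows "snd ((step_tm1 M ^^ j) c) \<ge> q"
  using halting_run_head_le[of "mirror_tm1 M" "- q" "mirror_config c" n j] assms
  by (simp add: run_mirror) (simp add: mirror_config_def scanned_def)

lemma scanned_run_agree:
  assumes "\<forall>j\<le>n. snd ((step_tm1 M ^^ j) c) \<in> S" "snd c = snd e" "\<forall>i\<in>S. fst c i = fst e i"
  shows "scanned ((step_tm1 M ^^ n) e) = scanned ((step_tm1 M ^^ n) c)"
proof -
  have "snd ((step_tm1 M ^^ j) c) = snd ((step_tm1 M ^^ j) e) \<and>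
        (\<forall>i\<in>S. fst ((step_tm1 M ^^ j) c) i = fst ((step_tm1 M ^^ j) e) i)" if "j \<le> n" for j
    using that
  proof (induction j)
    case (Suc j)
    then have "snd ((step_tm1 M ^^ j) c) \<in> S" using assms(1) Suc_leD by blast
    with Suc show ?case
      by (cases "(step_tm1 M ^^ j) c"; cases "(step_tm1 M ^^ j) e") (simp add: step_tm1_simp)
  qed (use assms(2,3) in simp)
  then show ?thesis using assms(1) by (simp add: scanned_def)
qed

definition shift_config :: "int \<Rightarrow> config \<Rightarrow> config" where
  "shift_config d c = ((\<lambda>i. fst c (i - d)), snd c + d)"

lemma run_shift:
  "(step_tm1 M ^^ n) (shift_config d c) = shift_config d ((step_tm1 M ^^ n) c)"
proof -
  have "step_tm1 M (shift_config d c) = shift_config d (step_tm1 M c)" for c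
    by (cases c) (auto simp: shift_config_def step_tm1_simp fun_eq_iff)
  then show ?thesis by (induction n) simp_all
qed

lemma scanned_shift: "scanned (shift_config d c) = scanned c"
  by (simp add: scanned_def shift_config_def)

section \<open>Singleton languages\<close>

lemma halts_doubled_if_blank_moves_right:
  assumes "tm_blank M \<notin> tm_halt M" "snd (tm_delta M (tm_blank M)) = MoveR" "halts_tm1 M [a]"
  shows "halts_tm1 M [a, a]"
proof -
  let ?c = "init_config M [a]" and ?e = "init_config M [a, a]"
  obtain n where n: "scanned ((step_tm1 M ^^ n) ?c) \<in> tm_halt M"
    using assms(3) by (auto simp: halts_tm1_iff_halts_from halts_from_def)
  have "\<forall>j\<le>n. snd ((step_tm1 M ^^ j) ?c) \<le> 0"
    using halting_run_head_le[OF assms(1,2) _ _ n]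
    by (simp add: init_config_list_tape list_tape_def)
  then have "scanned ((step_tm1 M ^^ n) ?e) = scanned ((step_tm1 M ^^ n) ?c)"
    by (intro scanned_run_agree[where S = "{i. i \<le> 0}"])
      (auto simp: init_config_list_tape list_tape_def)
  with n show ?thesis
    unfolding halts_tm1_iff_halts_from halts_from_def by metis
qed

lemma halts_doubled_if_blank_moves_left:
  assumes "tm_blank M \<notin> tm_halt M" "snd (tm_delta M (tm_blank M)) = MoveL" "halts_tm1 M [a]"
  shows "halts_tm1 M [a, a]"
proof (cases "a \<in> tm_halt M")
  case True
  then have "scanned ((step_tm1 M ^^ 0) (init_config M [a, a])) \<in> tm_halt M"
    by (simp add: init_config_list_tape scanned_def list_tape_def)
  then show ?thesis
    unfolding halts_tm1_iff_halts_from halts_from_def by blast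
next
  case False
  let ?c = "init_config M [a]" and ?e = "init_config M [a, a]"
  obtain n where n: "scanned ((step_tm1 M ^^ n) ?c) \<in> tm_halt M"
    using assms(3) by (auto simp: halts_tm1_iff_halts_from halts_from_def)
  have right: "\<forall>j\<le>n. snd ((step_tm1 M ^^ j) ?c) \<ge> 0"
    using halting_run_head_ge[OF assms(1,2) _ _ n]
    by (simp add: init_config_list_tape list_tape_def)
  have "n \<noteq> 0"
  proof
    assume "n = 0"
    with n False show False by (simp add: init_config_list_tape scanned_def list_tape_def)
  qed
  then have "0 \<le> snd ((step_tm1 M ^^ 1) ?c)"
    using right[rule_format, of 1] by linarith
  then have a_right: "snd (tm_delta M a) = MoveR"
    by (cases "snd (tm_delta M a)") (simp_all add: init_config_list_tape step_tm1_simp list_tape_def)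
  have "scanned ((step_tm1 M ^^ n) (step_tm1 M ?e)) = scanned ((step_tm1 M ^^ n) (shift_config 1 ?c))"
  proof (rule scanned_run_agree[where S = "{i. i \<ge> 1}"])
    show "\<forall>j\<le>n. snd ((step_tm1 M ^^ j) (shift_config 1 ?c)) \<in> {i. i \<ge> 1}"
      using right by (simp add: run_shift) (simp add: shift_config_def)
  qed (use a_right in \<open>auto simp: shift_config_def init_config_list_tape list_tape_def step_tm1_simp\<close>)
  then have "scanned ((step_tm1 M ^^ n) (step_tm1 M ?e)) \<in> tm_halt M"
    using n by (simp add: run_shift scanned_shift)
  then show ?thesis
    unfolding halts_tm1_iff_halts_from halts_from_def by (metis comp_apply funpow_Suc_right)
qed

lemma halts_singleton_imp_halts_doubled:
  assumes "halts_tm1 M [a]"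
  shows "halts_tm1 M [] \<or> halts_tm1 M [a, a]"
proof (cases "tm_blank M \<in> tm_halt M")
  case True
  then have "scanned ((step_tm1 M ^^ 0) (init_config M [])) \<in> tm_halt M"
    by (simp add: init_config_list_tape scanned_def list_tape_def)
  then show ?thesis
    unfolding halts_tm1_iff_halts_from halts_from_def by blast
next
  case False
  then show ?thesis
    using assms halts_doubled_if_blank_moves_right halts_doubled_if_blank_moves_left
    by (cases "snd (tm_delta M (tm_blank M))") blast+
qed

lemma singleton_notin_TM_1state: "{[a]} \<notin> TM_1state"
proof
  assume "{[a]} \<in> TM_1state"
  then obtain M where L: "lang_tm1 M = {[a]}" unfolding TM_1state_def by blast
  then have "[a] \<in> lang_tm1 M" by simp
  then have "a \<in> tm_sigma M" "halts_tm1 M [a]" unfolding lang_tm1_def by auto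
  then have "[] \<in> lang_tm1 M \<or> [a, a] \<in> lang_tm1 M"
    using halts_singleton_imp_halts_doubled unfolding lang_tm1_def by auto
  with L show False by auto
qed

lemma regular_singleton: "regular {[a]}"
proof -
  define A where "A = \<lparr>dfa_states = {0, 1, 2}, dfa_alpha = {a}, dfa_start = 0, dfa_final = {1},
     dfa_trans = \<lambda>q _. min 2 (Suc q)\<rparr>"
  have "foldl (dfa_trans A) q w = min 2 (q + length w)" if "q \<le> 2" for q w
    using that by (induction w arbitrary: q) (auto simp: A_def)
  then have "lang_dfa A = {w \<in> lists {a}. length w = 1}"
    by (auto simp: lang_dfa_def) (auto simp: A_def)
  moreover have "wf_dfa A" by (simp add: A_def wf_dfa_def)
  moreover have "{w \<in> lists {a}. length w = 1} = {[a]}"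
    by (auto simp: length_Suc_conv)
  ultimately show ?thesis
    unfolding regular_def by auto
qed

section \<open>A one-state machine comparing \<open>2\<^sup>n\<close> with \<open>m\<close>\<close>

text \<open>Symbols: \<open>0\<close> blank, \<open>1\<close> and \<open>2\<close> input, \<open>8\<close> halting. In a \<open>counter_config m k cs p\<close> the cells
  \<open>0, \<dots>, m - 1\<close> hold fuel, \<open>m - k\<close> unused cells \<open>3\<close> followed by \<open>k\<close> spent cells \<open>4\<close> (turned into \<open>5\<close>
  while the head passes over them), then come the counter digits \<open>cs\<close> and the end marker \<open>8\<close>.
  The digits \<open>7\<close> and \<open>6\<close> stand for 0 and 1, the least significant digit first, and \<open>2\<close> marks a digit
  about to be set. Every visit to the fuel block spends one unit of fuel.\<close>

definition exp_delta :: "nat \<Rightarrow> nat \<times> move" where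
  "exp_delta s =
     (if s = 0 then (8, MoveL) else if s = 1 then (3, MoveR) else if s = 2 then (6, MoveR)
      else if s = 3 then (4, MoveR) else if s = 4 then (5, MoveL) else if s = 5 then (4, MoveR)
      else if s = 6 then (7, MoveL) else if s = 7 then (2, MoveL) else (8, MoveR))"

definition exp_tm1 :: tm1 where
  "exp_tm1 = \<lparr>tm_sigma = {1, 2}, tm_gamma = {0..8}, tm_blank = 0, tm_halt = {8},
     tm_delta = exp_delta\<rparr>"

lemma exp_tm1_simps [simp]:
  "tm_sigma exp_tm1 = {1, 2}" "tm_blank exp_tm1 = 0" "tm_halt exp_tm1 = {8}"
  "tm_delta exp_tm1 = exp_delta"
  by (simp_all add: exp_tm1_def)

lemma exp_delta_simps [simp]:
  "exp_delta 0 = (8, MoveL)" "exp_delta (Suc 0) = (3, MoveR)" "exp_delta 2 = (6, MoveR)"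
  "exp_delta 3 = (4, MoveR)" "exp_delta 4 = (5, MoveL)" "exp_delta 5 = (4, MoveR)"
  "exp_delta 6 = (7, MoveL)" "exp_delta 7 = (2, MoveL)"
  by (simp_all add: exp_delta_def)

lemma wf_exp_tm1: "wf_tm1 exp_tm1"
  by (auto simp: wf_tm1_def exp_tm1_def exp_delta_def)

definition counter_config :: "nat \<Rightarrow> nat \<Rightarrow> nat list \<Rightarrow> int \<Rightarrow> config" where
  "counter_config m k cs p = (list_tape 0 (replicate (m - k) 3 @ replicate k 4 @ cs @ [8]), p)"

lemma reaches_counter_config_init:
  "reaches exp_tm1 (init_config exp_tm1 (replicate m 1 @ replicate n 2))
     (counter_config m 0 (replicate n 7) (int m - 1))"
proof -
  have "reaches exp_tm1 (list_tape 0 (replicate m 1 @ replicate n 2), 0)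
          (list_tape 0 (replicate m 3 @ replicate n 2), int m)"
    using reaches_sweep_right[of 1 exp_tm1 3 0 "[]" m "replicate n 2"] by simp
  also have "reaches exp_tm1 \<dots> (list_tape 0 (replicate m 3 @ replicate n 6 @ [0]), int (m + n))"
    using reaches_sweep_right[of 2 exp_tm1 6 0 "replicate m 3" n "[]"]
      list_tape_append_blank[of 0 "replicate m 3 @ replicate n 6"] by simp
  also (rtranclp_trans) have "reaches exp_tm1 \<dots>
      (list_tape 0 (replicate m 3 @ replicate n 6 @ [8]), int (m + n) - 1)"
    using reaches_write[of "m + n" "replicate m 3 @ replicate n 6 @ [0]" 0 exp_tm1 8 MoveL 0]
    by (simp add: nth_append list_update_append)
  also (rtranclp_trans) have "reaches exp_tm1 \<dots>
      (list_tape 0 (replicate m 3 @ replicate n 7 @ [8]), int m - 1)"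
    using reaches_sweep_left[of 6 exp_tm1 7 0 "replicate m 3" n "[8]"] by simp
  finally (rtranclp_trans) show ?thesis
    by (simp add: init_config_list_tape counter_config_def)
qed

lemma halts_from_counter_config_fuel:
  assumes "k \<le> m"
  shows "halts_from exp_tm1 (counter_config m k cs (int m - 1)) \<longleftrightarrow>
         k < m \<and> halts_from exp_tm1 (counter_config m (Suc k) cs (int m))"
proof (cases "k < m")
  case True
  define us where "us = replicate (m - Suc k) (3::nat)"
  have start: "counter_config m k cs (int m - 1) =
      (list_tape 0 ((us @ [3]) @ replicate k 4 @ cs @ [8]), int (length (us @ [3]) + k) - 1)"
  proof -
    have "replicate (m - k) (3::nat) = us @ [3]"
      using True by (simp add: us_def replicate_append_same Suc_diff_Suc flip: replicate_Suc)
    then show ?thesis using True by (simp add: counter_config_def us_def of_nat_diff)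
  qed
  have stop: "counter_config m (Suc k) cs (int m) =
      (list_tape 0 ((us @ [4]) @ replicate k 4 @ cs @ [8]), int (length (us @ [4]) + k))"
    using True by (simp add: counter_config_def us_def replicate_app_Cons_same)
  have "reaches exp_tm1
      (list_tape 0 ((us @ [3]) @ replicate k 4 @ cs @ [8]), int (length (us @ [3]) + k) - 1)
      (list_tape 0 ((us @ [3]) @ replicate k 5 @ cs @ [8]), int (length (us @ [3])) - 1)"
    by (rule reaches_sweep_left) simp_all
  also have "reaches exp_tm1 \<dots>
      (list_tape 0 ((us @ [4]) @ replicate k 5 @ cs @ [8]), int (length us) + 1)"
    using reaches_write[of "length us" "(us @ [3]) @ replicate k 5 @ cs @ [8]" 3 exp_tm1 4 MoveR 0]
    by (simp add: nth_append list_update_append)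
  also (rtranclp_trans) have "reaches exp_tm1 \<dots>
      (list_tape 0 ((us @ [4]) @ replicate k 4 @ cs @ [8]), int (length (us @ [4]) + k))"
    using reaches_sweep_right[of 5 exp_tm1 4 0 "us @ [4]" k "cs @ [8]"] by (simp add: add.commute)
  finally (rtranclp_trans) show ?thesis
    using True by (simp add: reaches_halts_from_iff start stop)
next
  case False
  with assms have "k = m" by simp
  have "reaches exp_tm1 (list_tape 0 (replicate m 4 @ cs @ [8]), int m - 1)
          (list_tape 0 (replicate m 5 @ cs @ [8]), - 1)"
    using reaches_sweep_left[of 4 exp_tm1 5 0 "[]" m "cs @ [8]"] by simp
  moreover have "\<not> halts_from exp_tm1 (list_tape 0 (replicate m 5 @ cs @ [8]), - 1)"
    by (rule not_halts_from_blank_left) (simp_all add: list_tape_def)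
  ultimately show ?thesis
    using \<open>k = m\<close> by (simp add: reaches_halts_from_iff counter_config_def)
qed

lemma reaches_counter_config_carry:
  assumes "k \<le> m"
  shows "reaches exp_tm1 (counter_config m k (replicate i 6 @ 7 # rest) (int (m + i)))
           (counter_config m k (replicate i 7 @ 2 # rest) (int m - 1))"
proof -
  define us where "us = replicate (m - k) (3::nat) @ replicate k 4"
  have m: "length us = m" using assms by (simp add: us_def)
  have "reaches exp_tm1 (list_tape 0 ((us @ replicate i 6) @ 7 # rest @ [8]), int (m + i))
          (list_tape 0 ((us @ replicate i 6) @ 2 # rest @ [8]), int (length us + i) - 1)"
    using reaches_write[of "m + i" "(us @ replicate i 6) @ 7 # rest @ [8]" 7 exp_tm1 2 MoveL 0] m
    by (simp add: nth_append list_update_append)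
  also have "reaches exp_tm1 \<dots>
      (list_tape 0 (us @ replicate i 7 @ 2 # rest @ [8]), int (length us) - 1)"
    using reaches_sweep_left[of 6 exp_tm1 7 0 us i "2 # rest @ [8]"] by simp
  finally (rtranclp_trans) show ?thesis
    using m by (simp add: counter_config_def us_def)
qed

lemma reaches_counter_config_settle:
  assumes "k \<le> m"
  shows "reaches exp_tm1 (counter_config m k (replicate i 6 @ 2 # rest) (int (m + i)))
           (counter_config m k (replicate (Suc i) 6 @ rest) (int (m + Suc i)))"
proof -
  define us where "us = replicate (m - k) (3::nat) @ replicate k 4 @ replicate i 6"
  have "length us = m + i" using assms by (simp add: us_def)
  then show ?thesis
    using reaches_write[of "m + i" "us @ 2 # rest @ [8]" 2 exp_tm1 6 MoveR 0]
    by (simp add: counter_config_def us_def nth_append list_update_append replicate_app_Cons_same add.commute)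
qed

lemma halts_from_counter_config_end:
  assumes "k \<le> m"
  shows "halts_from exp_tm1 (counter_config m k cs (int (m + length cs)))"
proof -
  let ?xs = "replicate (m - k) 3 @ replicate k 4 @ cs @ [8::nat]"
  have "list_tape 0 ?xs (int (m + length cs)) = 8"
    using assms by (subst list_tape_nth) (auto simp: nth_append)
  then have "scanned ((step_tm1 exp_tm1 ^^ 0) (counter_config m k cs (int (m + length cs)))) = 8"
    by (simp only: counter_config_def scanned_def funpow_0 fst_conv snd_conv)
  then show ?thesis unfolding halts_from_def by (intro exI[of _ 0]) simp
qed

lemma halts_from_counter_config_count:
  assumes "k \<le> m"
  shows "halts_from exp_tm1 (counter_config m k (replicate i 7 @ rest) (int m)) \<longleftrightarrow>
         k + 2 ^ i - 1 \<le> m \<and>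
         halts_from exp_tm1 (counter_config m (k + 2 ^ i - 1) (replicate i 6 @ rest) (int (m + i)))"
  using assms
proof (induction i arbitrary: k rest)
  case (Suc i)
  define k' where "k' = k + 2 ^ i - 1"
  have k': "k + 2 ^ Suc i - 1 = Suc k' + 2 ^ i - 1" "Suc k' + 2 ^ i - 1 = k' + 2 ^ i"
    by (simp_all add: k'_def)
  have "halts_from exp_tm1 (counter_config m k (replicate (Suc i) 7 @ rest) (int m)) \<longleftrightarrow>
        k' \<le> m \<and> halts_from exp_tm1 (counter_config m k' (replicate i 6 @ 7 # rest) (int (m + i)))"
    using Suc.IH[of k "7 # rest"] Suc.prems by (simp add: k'_def replicate_app_Cons_same)
  also have "\<dots> \<longleftrightarrow> k' \<le> m \<and> halts_from exp_tm1 (counter_config m k' (replicate i 7 @ 2 # rest) (int m - 1))"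
    using reaches_counter_config_carry reaches_halts_from_iff by blast
  also have "\<dots> \<longleftrightarrow> k' < m \<and> halts_from exp_tm1 (counter_config m (Suc k') (replicate i 7 @ 2 # rest) (int m))"
    using halts_from_counter_config_fuel by fastforce
  also have "\<dots> \<longleftrightarrow> k' + 2 ^ i \<le> m \<and>
      halts_from exp_tm1 (counter_config m (k' + 2 ^ i) (replicate i 6 @ 2 # rest) (int (m + i)))"
  proof -
    have "k' + 2 ^ i \<le> m \<Longrightarrow> k' < m"
      using zero_less_power[of "2::nat" i] by linarith
    then show ?thesis
      using Suc.IH[of "Suc k'" "2 # rest"] k'(2) by (auto simp: Suc_le_eq)
  qed
  also have "\<dots> \<longleftrightarrow> k' + 2 ^ i \<le> m \<and>
      halts_from exp_tm1 (counter_config m (k' + 2 ^ i) (replicate (Suc i) 6 @ rest) (int (m + Suc i)))"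
    using reaches_counter_config_settle reaches_halts_from_iff by blast
  finally show ?case
    using k' by simp
qed simp

theorem halts_exp_tm1_iff:
  "halts_tm1 exp_tm1 (replicate m 1 @ replicate n 2) \<longleftrightarrow> 2 ^ n \<le> m"
proof -
  have "halts_tm1 exp_tm1 (replicate m 1 @ replicate n 2) \<longleftrightarrow>
        halts_from exp_tm1 (counter_config m 0 (replicate n 7) (int m - 1))"
    using reaches_counter_config_init reaches_halts_from_iff halts_tm1_iff_halts_from by blast
  also have "\<dots> \<longleftrightarrow> 0 < m \<and> halts_from exp_tm1 (counter_config m 1 (replicate n 7 @ []) (int m))"
    using halts_from_counter_config_fuel[of 0 m] by simp
  also have "\<dots> \<longleftrightarrow> 2 ^ n \<le> m"
    using halts_from_counter_config_count[of 1 m n "[]"]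
      halts_from_counter_config_end[of "2 ^ n" m "replicate n 6"]
      order.strict_trans2[OF zero_less_power[of "2::nat" n], of m]
    by (auto simp: Suc_le_eq)
  finally show ?thesis .
qed

section \<open>Parse trees and the pumping lemma\<close>

datatype ptree = Leaf nat | Node nat "ptree list"

fun root :: "ptree \<Rightarrow> nat + nat" where
  "root (Leaf a) = Inr a"
| "root (Node A ts) = Inl A"

fun yield :: "ptree \<Rightarrow> nat list" where
  "yield (Leaf a) = [a]"
| "yield (Node A ts) = concat (map yield ts)"

fun ptree_valid :: "(nat \<times> (nat + nat) list) set \<Rightarrow> ptree \<Rightarrow> bool" where
  "ptree_valid P (Leaf a) = True"
| "ptree_valid P (Node A ts) = ((A, map root ts) \<in> P \<and> (\<forall>t\<in>set ts. ptree_valid P t))"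

fun height :: "ptree \<Rightarrow> nat" where
  "height (Leaf a) = 0"
| "height (Node A ts) = Suc (Max (insert 0 (height ` set ts)))"

lemma cfg_step_append:
  assumes "(\<alpha>, \<beta>) \<in> cfg_step P"
  shows "(u @ \<alpha> @ v, u @ \<beta> @ v) \<in> cfg_step P"
proof -
  obtain u' v' A \<gamma> where "\<alpha> = u' @ [Inl A] @ v'" "\<beta> = u' @ \<gamma> @ v'" "(A, \<gamma>) \<in> P"
    using assms unfolding cfg_step_def by blast
  then have "((u @ u') @ [Inl A] @ (v' @ v), (u @ u') @ \<gamma> @ (v' @ v)) \<in> cfg_step P"
    unfolding cfg_step_def by blast
  then show ?thesis using \<open>\<alpha> = _\<close> \<open>\<beta> = _\<close> by simp
qed

lemma cfg_derives_append:
  assumes "(\<alpha>, \<beta>) \<in> (cfg_step P)\<^sup>*"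
  shows "(u @ \<alpha> @ v, u @ \<beta> @ v) \<in> (cfg_step P)\<^sup>*"
  using assms by induction (auto intro: rtrancl_into_rtrancl cfg_step_append)

lemma cfg_derives_concat:
  assumes "(\<alpha>1, \<beta>1) \<in> (cfg_step P)\<^sup>*" "(\<alpha>2, \<beta>2) \<in> (cfg_step P)\<^sup>*"
  shows "(\<alpha>1 @ \<alpha>2, \<beta>1 @ \<beta>2) \<in> (cfg_step P)\<^sup>*"
  using cfg_derives_append[OF assms(1), of "[]" \<alpha>2] cfg_derives_append[OF assms(2), of \<beta>1 "[]"]
  by simp

lemma ptree_valid_derives:
  "ptree_valid P t \<Longrightarrow> ([root t], map Inr (yield t)) \<in> (cfg_step P)\<^sup>*"
proof (induction t)
  case (Node A ts)
  have "(map root ts, map Inr (concat (map yield ts))) \<in> (cfg_step P)\<^sup>*"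
  proof -
    have "\<forall>t\<in>set ts. ([root t], map Inr (yield t)) \<in> (cfg_step P)\<^sup>*"
      using Node by simp
    then show ?thesis
    proof (induction ts)
      case (Cons t ts)
      then show ?case using cfg_derives_concat[of "[root t]" "map Inr (yield t)" P] by simp
    qed simp
  qed
  moreover have "([Inl A], map root ts) \<in> cfg_step P"
    using Node.prems unfolding cfg_step_def by force
  ultimately show ?case by (simp add: converse_rtrancl_into_rtrancl)
qed simp

lemma derives_ptrees:
  assumes "(\<alpha>, map Inr w) \<in> (cfg_step P)\<^sup>*"
  shows "\<exists>ts. map root ts = \<alpha> \<and> (\<forall>t\<in>set ts. ptree_valid P t) \<and> concat (map yield ts) = w"
  using assms
proof (induction rule: converse_rtrancl_induct)
  case base
  show ?case by (intro exI[of _ "map Leaf w"]) (induction w, auto)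
next
  case (step y z)
  then obtain ts where ts: "map root ts = z" "\<forall>t\<in>set ts. ptree_valid P t" "concat (map yield ts) = w"
    by (elim exE conjE) simp
  from step(1) obtain u v A \<beta> where e: "y = u @ [Inl A] @ v" "z = u @ \<beta> @ v" "(A, \<beta>) \<in> P"
    unfolding cfg_step_def by blast
  from ts(1) e(2) obtain ts1 ts2 ts3 where
    "ts = ts1 @ ts2 @ ts3" "map root ts1 = u" "map root ts2 = \<beta>" "map root ts3 = v"
    by (metis map_eq_append_conv)
  with ts e show ?case
    by (intro exI[of _ "ts1 @ [Node A ts2] @ ts3"]) auto
qed

lemma lang_cfg_iff_ptree:
  "w \<in> lang_cfg (P, S) \<longleftrightarrow> (\<exists>t. ptree_valid P t \<and> root t = Inl S \<and> yield t = w)"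
proof
  assume "w \<in> lang_cfg (P, S)"
  then have "([Inl S], map Inr w) \<in> (cfg_step P)\<^sup>*" by (simp add: lang_cfg_def)
  from derives_ptrees[OF this] obtain ts
    where "map root ts = [Inl S]" "\<forall>t\<in>set ts. ptree_valid P t" "concat (map yield ts) = w"
    by (elim exE conjE) simp
  then show "\<exists>t. ptree_valid P t \<and> root t = Inl S \<and> yield t = w"
    by (auto simp: map_eq_Cons_conv)
next
  assume "\<exists>t. ptree_valid P t \<and> root t = Inl S \<and> yield t = w"
  then show "w \<in> lang_cfg (P, S)"
    unfolding lang_cfg_def using ptree_valid_derives by fastforce
qed

datatype pctxt = Hole | CNode nat "ptree list" pctxt "ptree list"

fun plug :: "pctxt \<Rightarrow> ptree \<Rightarrow> ptree" where
  "plug Hole t = t"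
| "plug (CNode A l c r) t = Node A (l @ [plug c t] @ r)"

fun ctxt_comp :: "pctxt \<Rightarrow> pctxt \<Rightarrow> pctxt" where
  "ctxt_comp Hole d = d"
| "ctxt_comp (CNode A l c r) d = CNode A l (ctxt_comp c d) r"

fun left_yield :: "pctxt \<Rightarrow> nat list" where
  "left_yield Hole = []"
| "left_yield (CNode A l c r) = concat (map yield l) @ left_yield c"

fun right_yield :: "pctxt \<Rightarrow> nat list" where
  "right_yield Hole = []"
| "right_yield (CNode A l c r) = right_yield c @ concat (map yield r)"

fun ctxt_root :: "pctxt \<Rightarrow> nat + nat \<Rightarrow> nat + nat" where
  "ctxt_root Hole X = X"
| "ctxt_root (CNode A l c r) X = Inl A"

fun ctxt_valid :: "(nat \<times> (nat + nat) list) set \<Rightarrow> pctxt \<Rightarrow> nat + nat \<Rightarrow> bool" where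
  "ctxt_valid P Hole X = True"
| "ctxt_valid P (CNode A l c r) X = ((A, map root l @ [ctxt_root c X] @ map root r) \<in> P \<and>
     (\<forall>t\<in>set l \<union> set r. ptree_valid P t) \<and> ctxt_valid P c X)"

lemma plug_ctxt_comp: "plug (ctxt_comp c d) t = plug c (plug d t)"
  by (induction c) auto

lemma yield_plug: "yield (plug c t) = left_yield c @ yield t @ right_yield c"
  by (induction c) auto

lemma root_plug: "root (plug c t) = ctxt_root c (root t)"
  by (cases c) auto

lemma ptree_valid_plug: "ptree_valid P (plug c t) \<longleftrightarrow> ctxt_valid P c (root t) \<and> ptree_valid P t"
  by (induction c) (auto simp: root_plug)

lemma size_plug_less: "c \<noteq> Hole \<Longrightarrow> size t < size (plug c t)"
proof (induction c)
  case (CNode A l c r)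
  then show ?case by (cases "c = Hole") auto
qed simp

lemma size_plug_mono: "size s < size t \<Longrightarrow> size (plug c s) < size (plug c t)"
  by (induction c) (auto simp: size_list_append)

lemma height_less_Node: "t \<in> set ts \<Longrightarrow> height t < height (Node A ts)"
  by (simp add: le_imp_less_Suc)

lemma height_plug: "height t \<le> height (plug c t)"
proof (induction c)
  case (CNode A l c r)
  then show ?case using height_less_Node[of "plug c t" "l @ [plug c t] @ r" A] by simp
qed simp

lemma ptree_pump:
  assumes "ptree_valid P (plug c (plug d t))" "ctxt_root d (root t) = root t"
  shows "ptree_valid P (plug c ((plug d ^^ i) t)) \<and> root (plug c ((plug d ^^ i) t)) = root (plug c t) \<and>
    yield (plug c ((plug d ^^ i) t)) =
      left_yield c @ concat (replicate i (left_yield d)) @ yield t @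
      concat (replicate i (right_yield d)) @ right_yield c"
proof -
  have d: "ctxt_valid P d (root t)" "ptree_valid P t"
    using assms by (simp_all add: ptree_valid_plug root_plug)
  have "ptree_valid P ((plug d ^^ i) t) \<and> root ((plug d ^^ i) t) = root t \<and>
    yield ((plug d ^^ i) t) =
      concat (replicate i (left_yield d)) @ yield t @ concat (replicate i (right_yield d))"
  proof (induction i)
    case (Suc i)
    have "concat (replicate i ys) @ ys = ys @ concat (replicate i ys)" for ys :: "nat list"
      by (induction i) auto
    with Suc show ?case
      using assms(2) d by (simp add: ptree_valid_plug root_plug yield_plug)
  qed (use d in simp)
  then show ?thesis
    using assms by (simp add: ptree_valid_plug root_plug yield_plug)
qed

definition max_rhs :: "(nat \<times> (nat + nat) list) set \<Rightarrow> nat" where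
  "max_rhs P = Max (insert 1 ((\<lambda>(A, \<alpha>). length \<alpha>) ` P))"

lemma max_rhs_ge_1: "finite P \<Longrightarrow> 1 \<le> max_rhs P"
  unfolding max_rhs_def by (intro Max_ge) auto

lemma length_yield_le:
  assumes "finite P" "ptree_valid P t"
  shows "length (yield t) \<le> max_rhs P ^ height t"
  using assms(2)
proof (induction t)
  case (Node A ts)
  let ?b = "max_rhs P" and ?h = "Max (insert 0 (height ` set ts))"
  have "1 \<le> ?b" "length ts \<le> ?b"
    using assms(1) Node.prems unfolding max_rhs_def by (force intro: Max_ge)+
  have "length (yield t) \<le> ?b ^ ?h" if "t \<in> set ts" for t
  proof -
    have "length (yield t) \<le> ?b ^ height t" using Node that by simp
    also have "\<dots> \<le> ?b ^ ?h" using \<open>1 \<le> ?b\<close> that by (intro power_increasing) auto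
    finally show ?thesis .
  qed
  then have "length (yield (Node A ts)) \<le> length ts * ?b ^ ?h"
    using sum_list_mono[of ts "\<lambda>t. length (yield t)" "\<lambda>_. ?b ^ ?h"]
    by (simp add: length_concat sum_list_triv comp_def)
  also have "\<dots> \<le> ?b ^ height (Node A ts)"
    using \<open>length ts \<le> ?b\<close> by simp
  finally show ?case .
qed simp

lemma highest_child:
  assumes "height (Node A ts) = Suc h" "0 < h"
  obtains l t r where "ts = l @ t # r" "height t = h"
proof -
  have "Max (insert 0 (height ` set ts)) \<in> insert 0 (height ` set ts)"
    by (rule Max_in) auto
  with assms obtain t where t: "t \<in> set ts" "height t = h" by auto
  from t(1) obtain l r where "ts = l @ t # r" by (meson split_list)
  with t(2) show thesis using that by blast
qed

lemma exists_subtree_height: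
  assumes "Suc K \<le> height t"
  shows "\<exists>c s. t = plug c s \<and> height s = Suc K"
  using assms
proof (induction t)
  case (Node A ts)
  show ?case
  proof (cases "height (Node A ts) = Suc K")
    case True
    then show ?thesis by (metis plug.simps(1))
  next
    case False
    with Node.prems obtain h where h: "height (Node A ts) = Suc h" "Suc K \<le> h"
      by (cases "height (Node A ts)") auto
    then obtain l t r where ts: "ts = l @ t # r" and t: "height t = h"
      by (elim highest_child) simp
    then obtain c s where "t = plug c s" "height s = Suc K"
      using Node.IH[of t] h(2) by auto
    with ts have "Node A ts = plug (CNode A l c r) s \<and> height s = Suc K" by simp
    then show ?thesis by blast
  qed
qed simp

lemma ptree_repeated_or_distinct_path:
  "(\<exists>c1 c2 t0. t = plug c1 (plug c2 t0) \<and> c2 \<noteq> Hole \<and> lab (plug c2 t0) = lab t0) \<or>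
   (\<exists>ss. length ss = height t \<and> distinct (map lab ss) \<and>
      (\<forall>s\<in>set ss. s \<notin> range Leaf \<and> (\<exists>c. t = plug c s)))"
proof (induction t)
  case (Node A ts)
  show ?case
  proof (cases "height (Node A ts) = 1")
    case True
    then show ?thesis
      by (intro disjI2 exI[of _ "[Node A ts]"]) (auto intro: exI[of _ Hole])
  next
    case False
    then obtain h where h: "height (Node A ts) = Suc h" "0 < h"
      by (cases "height (Node A ts)") auto
    then obtain l t r where ts: "ts = l @ t # r" and t: "height t = h"
      by (rule highest_child)
    have sub: "Node A ts = plug (CNode A l c r) s" if "t = plug c s" for c s
      using ts that by simp
    have "t \<in> set ts" using ts by simp
    from Node.IH[OF this] show ?thesis
    proof (elim disjE exE conjE)
      fix c1 c2 t0
      assume "t = plug c1 (plug c2 t0)" "c2 \<noteq> Hole" "lab (plug c2 t0) = lab t0"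
      then show ?thesis using sub by blast
    next
      fix ss
      assume ss: "length ss = height t" "distinct (map lab ss)"
        "\<forall>s\<in>set ss. s \<notin> range Leaf \<and> (\<exists>c. t = plug c s)"
      show ?thesis
      proof (cases "lab (Node A ts) \<in> lab ` set ss")
        case True
        then obtain s c where "lab s = lab (Node A ts)" "t = plug c s" using ss(3) by auto
        then have "Node A ts = plug Hole (plug (CNode A l c r) s) \<and> CNode A l c r \<noteq> Hole \<and>
            lab (plug (CNode A l c r) s) = lab s"
          using sub by simp
        then show ?thesis by blast
      next
        case False
        have "s \<notin> range Leaf \<and> (\<exists>c. Node A ts = plug c s)" if "s \<in> set (Node A ts # ss)" for s
        proof (cases "s = Node A ts")
          case True
          then have "s = plug Hole s" "s \<notin> range Leaf" by auto
          with True show ?thesis by metis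
        next
          case False
          with that ss(3) obtain c where "s \<notin> range Leaf" "t = plug c s" by auto
          with sub show ?thesis by blast
        qed
        then show ?thesis
          using False ss(1,2) h(1) t by (intro disjI2 exI[of _ "Node A ts # ss"]) simp
      qed
    qed
  qed
qed simp

lemma ptree_repeated_label:
  assumes "finite L" "card L < height t"
    and "\<And>c s. t = plug c s \<Longrightarrow> s \<notin> range Leaf \<Longrightarrow> lab s \<in> L"
  obtains c1 c2 t0 where "t = plug c1 (plug c2 t0)" "c2 \<noteq> Hole" "lab (plug c2 t0) = lab t0"
  using ptree_repeated_or_distinct_path[of t lab]
proof (elim disjE exE conjE)
  fix ss
  assume ss: "length ss = height t" "distinct (map lab ss)"
    "\<forall>s\<in>set ss. s \<notin> range Leaf \<and> (\<exists>c. t = plug c s)"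
  have "lab ` set ss \<subseteq> L"
    using ss(3) assms(3) by fastforce
  then have "card (lab ` set ss) \<le> card L"
    using assms(1) by (rule card_mono[rotated])
  moreover have "card (lab ` set ss) = height t"
    using ss(1,2) by (metis distinct_card length_map set_map)
  ultimately show thesis
    using assms(2) by simp
qed

definition terminals :: "(nat \<times> (nat + nat) list) set \<Rightarrow> nat set" where
  "terminals P = {a. \<exists>(A, \<alpha>) \<in> P. Inr a \<in> set \<alpha>}"

lemma finite_terminals: "finite P \<Longrightarrow> finite (terminals P)"
proof -
  assume "finite P"
  moreover have "terminals P = (\<Union>(A, \<alpha>)\<in>P. Inr -` set \<alpha>)"
    unfolding terminals_def by auto
  ultimately show ?thesis
    by (auto intro!: finite_vimageI simp: inj_on_def)
qed

lemma set_yield_subset_terminals: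
  "ptree_valid P t \<Longrightarrow> a \<in> set (yield t) \<Longrightarrow> t = Leaf a \<or> a \<in> terminals P"
proof (induction t)
  case (Node A ts)
  then obtain t where t: "t \<in> set ts" "a \<in> set (yield t)" by auto
  with Node have "t = Leaf a \<or> a \<in> terminals P" by simp
  moreover have "t = Leaf a \<Longrightarrow> a \<in> terminals P"
    using Node.prems t(1) unfolding terminals_def by force
  ultimately show ?case by blast
qed simp

definition node_labels :: "(nat \<times> (nat + nat) list) set \<Rightarrow> ((nat + nat) \<times> nat set) set" where
  "node_labels P = Inl ` fst ` P \<times> Pow (terminals P)"

lemma finite_node_labels: "finite P \<Longrightarrow> finite (node_labels P)"
  by (simp add: node_labels_def finite_terminals)

lemma label_in_node_labels:
  assumes "ptree_valid P s" "s \<notin> range Leaf"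
  shows "(root s, set (yield s)) \<in> node_labels P"
proof -
  obtain A ts where "s = Node A ts" using assms(2) by (cases s) auto
  then show ?thesis
    using assms set_yield_subset_terminals[OF assms(1)] unfolding node_labels_def by force
qed

text \<open>Two nodes on a path with the same root and the same set of letters in their yields give a
  pumpable pair of contexts whose side yields only use letters of the inner yield.\<close>

lemma ptree_pumpable_subtree:
  assumes "ptree_valid P t" "finite P" "Suc (card (node_labels P)) \<le> height t"
  obtains c d t0 where "t = plug c (plug d t0)" "d \<noteq> Hole" "ctxt_root d (root t0) = root t0"
    "set (yield (plug d t0)) = set (yield t0)" "height (plug d t0) \<le> Suc (card (node_labels P))"
proof -
  let ?lab = "\<lambda>t. (root t, set (yield t))"
  obtain c s where cs: "t = plug c s" "height s = Suc (card (node_labels P))"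
    using exists_subtree_height assms(3) by blast
  obtain c1 d t0 where s: "s = plug c1 (plug d t0)" "d \<noteq> Hole" "?lab (plug d t0) = ?lab t0"
  proof (rule ptree_repeated_label[OF finite_node_labels[OF assms(2)]])
    show "card (node_labels P) < height s" using cs(2) by simp
    fix c' s' assume "s = plug c' s'" "s' \<notin> range Leaf"
    moreover have "ptree_valid P s'"
      using assms(1) by (simp add: cs(1) \<open>s = plug c' s'\<close> ptree_valid_plug)
    ultimately show "?lab s' \<in> node_labels P"
      by (intro label_in_node_labels)
  qed
  show thesis
  proof (rule that[of "ctxt_comp c c1" d t0])
    show "t = plug (ctxt_comp c c1) (plug d t0)" by (simp add: cs(1) s(1) plug_ctxt_comp)
    show "height (plug d t0) \<le> Suc (card (node_labels P))"
      using height_plug[of "plug d t0" c1] cs(2) s(1) by simp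
  qed (use s(2,3) in \<open>simp_all add: root_plug\<close>)
qed

theorem cfl_pumping:
  assumes "finite P"
  obtains p where "\<And>w. w \<in> lang_cfg (P, S) \<Longrightarrow> p < length w \<Longrightarrow>
    \<exists>u v x y z. w = u @ v @ x @ y @ z \<and> length (v @ x @ y) \<le> p \<and> v @ y \<noteq> [] \<and>
      set (v @ y) \<subseteq> set x \<and>
      (\<forall>i. u @ concat (replicate i v) @ x @ concat (replicate i y) @ z \<in> lang_cfg (P, S))"
proof
  let ?p = "max_rhs P ^ Suc (card (node_labels P))"
  fix w assume "w \<in> lang_cfg (P, S)" and long: "?p < length w"
  then obtain t where t: "ptree_valid P t" "root t = Inl S" "yield t = w"
    and minimal: "\<And>t'. ptree_valid P t' \<Longrightarrow> root t' = Inl S \<Longrightarrow> yield t' = w \<Longrightarrow> size t \<le> size t'"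
    using ex_has_least_nat[of "\<lambda>t. ptree_valid P t \<and> root t = Inl S \<and> yield t = w" _ size]
    unfolding lang_cfg_iff_ptree by blast
  have "Suc (card (node_labels P)) \<le> height t"
  proof (rule ccontr)
    assume "\<not> ?thesis"
    then have "max_rhs P ^ height t \<le> ?p"
      using max_rhs_ge_1[OF assms] by (intro power_increasing) auto
    then show False using length_yield_le[OF assms t(1)] t(3) long by simp
  qed
  then obtain c d t0 where t': "t = plug c (plug d t0)" and d: "d \<noteq> Hole"
    "ctxt_root d (root t0) = root t0" "set (yield (plug d t0)) = set (yield t0)"
    "height (plug d t0) \<le> Suc (card (node_labels P))"
    using ptree_pumpable_subtree[OF t(1) assms] by blast
  have root_c: "ctxt_root c (root t0) = Inl S"
    using t(2) d(2) by (simp add: t' root_plug)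
  note pump = ptree_pump[OF t(1)[unfolded t'] d(2)]
  show "\<exists>u v x y z. w = u @ v @ x @ y @ z \<and> length (v @ x @ y) \<le> ?p \<and> v @ y \<noteq> [] \<and>
      set (v @ y) \<subseteq> set x \<and>
      (\<forall>i. u @ concat (replicate i v) @ x @ concat (replicate i y) @ z \<in> lang_cfg (P, S))"
  proof (intro exI conjI allI)
    show "w = left_yield c @ left_yield d @ yield t0 @ right_yield d @ right_yield c"
      using t(3) by (simp add: t' yield_plug)
    have "ptree_valid P (plug d t0)"
      using t(1) unfolding t' ptree_valid_plug[of P c] by blast
    from length_yield_le[OF assms this]
    have "length (left_yield d @ yield t0 @ right_yield d) \<le> max_rhs P ^ height (plug d t0)"
      by (simp add: yield_plug)
    also have "\<dots> \<le> ?p"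
      using d(4) max_rhs_ge_1[OF assms] by (intro power_increasing) auto
    finally show "length (left_yield d @ yield t0 @ right_yield d) \<le> ?p" .
    show "set (left_yield d @ right_yield d) \<subseteq> set (yield t0)"
      using d(3) by (auto simp: yield_plug)
    show "left_yield c @ concat (replicate i (left_yield d)) @ yield t0 @
        concat (replicate i (right_yield d)) @ right_yield c \<in> lang_cfg (P, S)" for i
      unfolding lang_cfg_iff_ptree using pump[of i] root_c by (auto simp: root_plug)
    show "left_yield d @ right_yield d \<noteq> []"
    proof
      assume "left_yield d @ right_yield d = []"
      then have "ptree_valid P (plug c t0) \<and> root (plug c t0) = Inl S \<and> yield (plug c t0) = w"
        using pump[of 0] root_c t(3) by (simp add: t' root_plug yield_plug)
      moreover have "size (plug c t0) < size t"
        unfolding t' by (intro size_plug_mono size_plug_less d(1))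
      ultimately show False
        using minimal[of "plug c t0"] by auto
    qed
  qed
qed

section \<open>A one-state language that is not context-free\<close>

lemma sorted_if_all_le: "\<forall>a\<in>set xs. \<forall>b\<in>set xs. a \<le> b \<Longrightarrow> sorted xs"
  by (induction xs) auto

lemma sorted_pump:
  fixes u v x y z :: "'a::linorder list"
  assumes "sorted (u @ v @ x @ y @ z)" "set v \<subseteq> set x" "set y \<subseteq> set x"
  shows "sorted (u @ concat (replicate i v) @ x @ concat (replicate i y) @ z)"
proof -
  have set_pow: "set (concat (replicate i ys)) \<subseteq> set ys" for ys :: "'a list"
    by (induction i) auto
  have vx: "\<forall>a\<in>set v. \<forall>b\<in>set x. a \<le> b" and xy: "\<forall>a\<in>set x. \<forall>b\<in>set y. a \<le> b"
    using assms(1) by (simp_all add: sorted_append)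
  have "sorted (concat (replicate i v))"
    using vx assms(2) set_pow[of v] by (intro sorted_if_all_le) (meson subsetD)
  moreover have "sorted (concat (replicate i y))"
    using xy assms(3) set_pow[of y] by (intro sorted_if_all_le) (meson subsetD)
  ultimately show ?thesis
    using assms(1) set_pow[of v] set_pow[of y] unfolding sorted_append set_append by (auto 0 3)
qed

lemma sorted_two_letters:
  fixes a b :: "'a::linorder"
  assumes "a < b" "sorted xs" "set xs \<subseteq> {a, b}"
  shows "xs = replicate (count_list xs a) a @ replicate (count_list xs b) b"
  using assms(2,3)
proof (induction xs)
  case (Cons c xs)
  show ?case
  proof (cases "c = a")
    case False
    then have "c = b" "\<forall>d\<in>set xs. b \<le> d" using Cons.prems by auto
    then have "count_list xs a = 0" using assms(1) by (auto simp: count_list_0_iff)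
    then show ?thesis
      using Cons \<open>c = b\<close> assms(1) by simp
  qed (use Cons assms(1) in \<open>simp add: less_imp_neq\<close>)
qed simp

lemma count_list_pump:
  "count_list (u @ concat (replicate i v) @ x @ concat (replicate i y) @ z) a =
   count_list (u @ x @ z) a + i * count_list (v @ y) a"
proof -
  have "count_list (concat (replicate i ys)) a = i * count_list ys a" for ys
    by (induction i) auto
  then show ?thesis by (simp add: algebra_simps)
qed

lemma sorted_in_lang_exp_tm1_iff:
  assumes "sorted xs"
  shows "xs \<in> lang_tm1 exp_tm1 \<longleftrightarrow> set xs \<subseteq> {1, 2} \<and> 2 ^ count_list xs 2 \<le> count_list xs 1"
proof (cases "set xs \<subseteq> {1, 2}")
  case True
  then have "xs = replicate (count_list xs 1) 1 @ replicate (count_list xs 2) 2"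
    using sorted_two_letters[OF _ assms] by simp
  then have "halts_tm1 exp_tm1 xs \<longleftrightarrow>
      halts_tm1 exp_tm1 (replicate (count_list xs 1) 1 @ replicate (count_list xs 2) 2)"
    by (rule arg_cong)
  then have "halts_tm1 exp_tm1 xs \<longleftrightarrow> 2 ^ count_list xs 2 \<le> count_list xs 1"
    by (simp only: halts_exp_tm1_iff)
  then show ?thesis
    using True by (auto simp: lang_tm1_def)
qed (auto simp: lang_tm1_def)

lemma lang_exp_tm1_not_pumpable:
  assumes w: "replicate (2 ^ Suc p) 1 @ replicate (Suc p) 2 = u @ v @ x @ y @ z"
    and short: "length (v @ x @ y) \<le> p" and "v @ y \<noteq> []" "set (v @ y) \<subseteq> set x"
  shows "\<exists>i. u @ concat (replicate i v) @ x @ concat (replicate i y) @ z \<notin> lang_tm1 exp_tm1"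
proof (rule ccontr)
  assume "\<not> ?thesis"
  then have pumped: "u @ concat (replicate i v) @ x @ concat (replicate i y) @ z \<in> lang_tm1 exp_tm1"
    for i by blast
  let ?w = "replicate (2 ^ Suc p) 1 @ replicate (Suc p) (2::nat)"
  let ?c = "\<lambda>i a. count_list (u @ x @ z) a + i * count_list (v @ y) a"
  have "set (v @ y) \<subseteq> set ?w" unfolding w by auto
  then have vy_letters: "set (v @ y) \<subseteq> {1, 2}" by auto
  have bound: "2 ^ ?c i 2 \<le> ?c i 1" for i
  proof -
    have "sorted (u @ concat (replicate i v) @ x @ concat (replicate i y) @ z)"
      using assms(4) by (intro sorted_pump) (auto simp flip: w simp: sorted_append)
    then have "2 ^ count_list (u @ concat (replicate i v) @ x @ concat (replicate i y) @ z) 2 \<le>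
        count_list (u @ concat (replicate i v) @ x @ concat (replicate i y) @ z) 1"
      using pumped[of i] sorted_in_lang_exp_tm1_iff by blast
    then show ?thesis by (simp only: count_list_pump)
  qed
  have "?c 1 a = count_list ?w a" for a
    using count_list_pump[of u 1 v x y z a] unfolding w by simp
  then have c1: "?c 1 1 = 2 ^ Suc p" and c2: "?c 1 2 = Suc p"
    by (simp_all add: count_list_eq_length_filter)
  have "count_list (v @ y) 1 + count_list (v @ y) 2 = length (v @ y)"
    using sum_count_set[OF vy_letters] by simp
  moreover have "0 < length (v @ y)" "length (v @ y) \<le> p"
    using short \<open>v @ y \<noteq> []\<close> by auto
  ultimately consider "count_list (v @ y) 2 = 0" "1 \<le> count_list (v @ y) 1"
    | "1 \<le> count_list (v @ y) 2" "count_list (v @ y) 1 \<le> p"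
    by linarith
  then show False
  proof cases
    case 1
    then show False
      using bound[of 0] c1 c2 by simp
  next
    case 2
    have "p < 2 ^ Suc p"
      using less_exp[of p] by (simp only: power_Suc)
    then have "?c 2 1 < 2 ^ Suc (Suc p)" using 2(2) c1 by simp
    moreover have "2 ^ Suc (Suc p) \<le> (2::nat) ^ ?c 2 2"
      using 2(1) c2 by (intro power_increasing) auto
    ultimately show False
      using bound[of 2] by simp
  qed
qed

lemma not_context_free_lang_exp_tm1: "\<not> context_free (lang_tm1 exp_tm1)"
proof
  assume "context_free (lang_tm1 exp_tm1)"
  then obtain G where G: "finite (fst G)" "lang_cfg G = lang_tm1 exp_tm1"
    unfolding context_free_def by blast
  obtain p where pumping: "\<And>w. w \<in> lang_tm1 exp_tm1 \<Longrightarrow> p < length w \<Longrightarrow>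
    \<exists>u v x y z. w = u @ v @ x @ y @ z \<and> length (v @ x @ y) \<le> p \<and> v @ y \<noteq> [] \<and>
      set (v @ y) \<subseteq> set x \<and>
      (\<forall>i. u @ concat (replicate i v) @ x @ concat (replicate i y) @ z \<in> lang_tm1 exp_tm1)"
    using cfl_pumping[OF G(1), of "snd G"] unfolding prod.collapse G(2) by blast
  let ?w = "replicate (2 ^ Suc p) 1 @ replicate (Suc p) (2::nat)"
  have w_in: "?w \<in> lang_tm1 exp_tm1"
    by (auto simp: sorted_in_lang_exp_tm1_iff sorted_append count_list_eq_length_filter)
  have w_long: "p < length ?w" by simp
  obtain u v x y z where "?w = u @ v @ x @ y @ z" "length (v @ x @ y) \<le> p"
    "v @ y \<noteq> []" "set (v @ y) \<subseteq> set x"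
    "\<forall>i. u @ concat (replicate i v) @ x @ concat (replicate i y) @ z \<in> lang_tm1 exp_tm1"
    using pumping[OF w_in w_long] by blast
  then show False
    using lang_exp_tm1_not_pumpable[of p u v x y z] by simp
qed

theorem theorem4:
  shows "(regular {[1]} \<and> {[1]} \<notin> TM_1state)
       \<and> (\<exists>L \<in> TM_1state. \<not> context_free L)"
proof (intro conjI bexI)
  show "regular {[1]}" by (rule regular_singleton)
  show "{[1]} \<notin> TM_1state" by (rule singleton_notin_TM_1state)
  show "lang_tm1 exp_tm1 \<in> TM_1state" using wf_exp_tm1 unfolding TM_1state_def by blast
  show "\<not> context_free (lang_tm1 exp_tm1)" by (rule not_context_free_lang_exp_tm1)
qed

end
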